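(* Let $S$ be a countable discrete inverse semigroup with identity having a minimal projection $e_0\in E(S)$, and let $\alpha\colon S\to\mathcal I(X)$ be a representation. The following are equivalent: (1) $X$ is $S$-amenable; (2) $D_{e_0}$ is not $S$-paradoxical; (3) $D_{e_0}$ is $S$-domain F\o lner.
   Context: Inverse semigroup: each $s$ has a unique $s^*$ with $ss^*s=s$, $s^*ss^*=s^*$; $E(S)=\{s^*s\}$ is the set of idempotents, ordered by $e\le f\iff ef=e$; $e_0$ is minimal if $f\le e_0$, $f\in E(S)$, implies $f=e_0$. A representation is a unital homomorphism $\alpha\colon S\to\mathcal I(X)$ into partial bijections of $X$; $D_{s^*s}$ is the domain of $\alpha_s$, and $D_e$ the domain of $\alpha_e$. $X$ is $S$-amenable if there is a finitely additive $\mu\colon\mathcal P(X)\to[0,\infty]$ with $\mu(X)=1$, $\mu(B)=\mu(\alpha_s(B))$ for $B\subseteq D_{s^*s}$, and $\mu(B)=\mu(B\cap D_{t^*t})$ for all $t\in S$, $B\subseteq X$. $A\subseteq X$ is $S$-paradoxical if there are $A_i,B_j\subseteq X$, $s_i,t_j\in S$ with $A_i\subseteq D_{s_i^*s_i}$, $B_j\subseteq D_{t_j^*t_j}$, $A=\bigsqcup_{i=1}^n\alpha_{s_i}(A_i)=\bigsqcup_{j=1}^m\alpha_{t_j}(B_j)\supseteq A_1\sqcup\dots\sqcup A_n\sqcup B_1\sqcup\dots\sqcup B_m$. $A$ is $S$-domain F\o lner if there are finite non-empty $F_n\subseteq A$ with $|\alpha_s(F_n\cap D_{s^*s})\setminus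 F_n|/|F_n|\to0$ for all $s\in S$. *)

theory Defs
  imports "HOL-Analysis.Analysis"
begin

definition inverse_semigroup :: "('s::monoid_mult) itself \<Rightarrow> bool" where
  "inverse_semigroup _ \<longleftrightarrow> (\<forall>s::'s. \<exists>!t. s * t * s = s \<and> t * s * t = t)"

definition star :: "'s::monoid_mult \<Rightarrow> 's" where
  "star s = (THE t. s * t * s = s \<and> t * s * t = t)"

definition idempotents :: "('s::monoid_mult) set" where
  "idempotents = {star s * s | s. True}"

definition idem_le :: "'s::monoid_mult \<Rightarrow> 's \<Rightarrow> bool" where
  "idem_le e f \<longleftrightarrow> e * f = e"

definition minimal_projection :: "'s::monoid_mult \<Rightarrow> bool" where
  "minimal_projection e0 \<longleftrightarrow> e0 \<in> idempotents \<and>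
     (\<forall>f \<in> idempotents. idem_le f e0 \<longrightarrow> f = e0)"

definition partial_bij :: "'x set \<Rightarrow> ('x \<Rightarrow> 'x option) \<Rightarrow> bool" where
  "partial_bij X f \<longleftrightarrow> dom f \<subseteq> X \<and> ran f \<subseteq> X \<and> inj_on f (dom f)"

definition representation :: "'x set \<Rightarrow> ('s::monoid_mult \<Rightarrow> 'x \<Rightarrow> 'x option) \<Rightarrow> bool" where
  "representation X \<alpha> \<longleftrightarrow>
     (\<forall>s. partial_bij X (\<alpha> s)) \<and>
     (\<forall>s t. \<alpha> (s * t) = \<alpha> s \<circ>\<^sub>m \<alpha> t) \<and>
     \<alpha> 1 = (\<lambda>x. if x \<in> X then Some x else None)"

definition Dom :: "('s \<Rightarrow> 'x \<Rightarrow> 'x option) \<Rightarrow> 's \<Rightarrow> 'x set" where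
  "Dom \<alpha> e = dom (\<alpha> e)"

definition img :: "('s \<Rightarrow> 'x \<Rightarrow> 'x option) \<Rightarrow> 's \<Rightarrow> 'x set \<Rightarrow> 'x set" where
  "img \<alpha> s B = {y. \<exists>x\<in>B. \<alpha> s x = Some y}"

definition S_amenable :: "'x set \<Rightarrow> ('s::monoid_mult \<Rightarrow> 'x \<Rightarrow> 'x option) \<Rightarrow> bool" where
  "S_amenable X \<alpha> \<longleftrightarrow> (\<exists>\<mu> :: 'x set \<Rightarrow> ennreal.
      (\<forall>A B. A \<subseteq> X \<longrightarrow> B \<subseteq> X \<longrightarrow> A \<inter> B = {} \<longrightarrow> \<mu> (A \<union> B) = \<mu> A + \<mu> B) \<and>
      \<mu> X = 1 \<and>
      (\<forall>s B. B \<subseteq> Dom \<alpha> (star s * s) \<longrightarrow> \<mu> B = \<mu> (img \<alpha> s B)) \<and>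
      (\<forall>t B. B \<subseteq> X \<longrightarrow> \<mu> B = \<mu> (B \<inter> Dom \<alpha> (star t * t))))"

definition S_paradoxical :: "'x set \<Rightarrow> ('s::monoid_mult \<Rightarrow> 'x \<Rightarrow> 'x option) \<Rightarrow> 'x set \<Rightarrow> bool" where
  "S_paradoxical X \<alpha> A \<longleftrightarrow> (\<exists>(n::nat) (m::nat) (As :: nat \<Rightarrow> 'x set) (Bs :: nat \<Rightarrow> 'x set)
        (ss :: nat \<Rightarrow> 's) (ts :: nat \<Rightarrow> 's).
      n \<ge> 1 \<and> m \<ge> 1 \<and>
      (\<forall>i<n. As i \<subseteq> X \<and> As i \<subseteq> Dom \<alpha> (star (ss i) * ss i)) \<and>
      (\<forall>j<m. Bs j \<subseteq> X \<and> Bs j \<subseteq> Dom \<alpha> (star (ts j) * ts j)) \<and>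
      A = (\<Union>i<n. img \<alpha> (ss i) (As i)) \<and>
      disjoint_family_on (\<lambda>i. img \<alpha> (ss i) (As i)) {..<n} \<and>
      A = (\<Union>j<m. img \<alpha> (ts j) (Bs j)) \<and>
      disjoint_family_on (\<lambda>j. img \<alpha> (ts j) (Bs j)) {..<m} \<and>
      disjoint_family_on As {..<n} \<and>
      disjoint_family_on Bs {..<m} \<and>
      (\<forall>i<n. \<forall>j<m. As i \<inter> Bs j = {}) \<and>
      (\<Union>i<n. As i) \<union> (\<Union>j<m. Bs j) \<subseteq> A)"

definition S_domain_Folner :: "('s::monoid_mult \<Rightarrow> 'x \<Rightarrow> 'x option) \<Rightarrow> 'x set \<Rightarrow> bool" where
  "S_domain_Folner \<alpha> A \<longleftrightarrow> (\<exists>F :: nat \<Rightarrow> 'x set.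
      (\<forall>n. finite (F n) \<and> F n \<noteq> {} \<and> F n \<subseteq> A) \<and>
      (\<forall>s. (\<lambda>n. real (card (img \<alpha> s (F n \<inter> Dom \<alpha> (star s * s)) - F n)) / real (card (F n)))
              \<longlonglongrightarrow> 0))"

end

theory Submission
  imports Defs
begin

text \<open>Minimality of \<open>e0\<close> makes every \<open>\<alpha>\<^sub>s\<close> an injection of \<open>D0 = D\<^bsub>e0\<^esub>\<close> into itself,
  defined on all of \<open>D0\<close>; this is what lets all three conditions be read off inside \<open>D0\<close>.
  An invariant mean gives \<open>D0\<close> mass 1, whereas a paradoxical decomposition would give it mass 2.
  Conversely, the relative densities in a F{\o}lner sequence have a cluster point among the
  \<open>[0,1]\<close>-valued set functions, and it is an invariant mean on \<open>D0\<close>. Finally, if there are no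
  F{\o}lner sets, some finite set of elements of the countable semigroup at least doubles every
  finite subset of \<open>D0\<close>; Hall's marriage theorem (extended to infinite families by compactness)
  then yields an injection of \<open>D0 \<times> {False, True}\<close> into \<open>D0\<close> acting piecewise by these elements,
  and its two halves form a paradoxical decomposition.\<close>

section \<open>Inverse monoids\<close>

locale inverse_monoid =
  assumes inverse_semigroup: "inverse_semigroup TYPE('s::monoid_mult)"
begin

lemma star_unique_ex: "\<exists>!t. (s::'s) * t * s = s \<and> t * s * t = t"
  using inverse_semigroup unfolding inverse_semigroup_def by blast

lemma mult_star_mult: "(s::'s) * star s * s = s"
  and star_mult_star: "star s * s * star s = star s"
  using theI'[OF star_unique_ex[of s]] unfolding star_def by auto

lemma star_unique: "(s::'s) * t * s = s \<Longrightarrow> t * s * t = t \<Longrightarrow> star s = t"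
  unfolding star_def using the1_equality[OF star_unique_ex] by blast

lemma star_idempotent: "(e::'s) * e = e \<Longrightarrow> star e = e"
  by (rule star_unique) simp_all

lemma idempotent_mult_idempotent:
  assumes a: "(a::'s) * a = a" and b: "b * b = b"
  shows "(a * b) * (a * b) = a * b"
proof -
  have a': "\<And>z. a * (a * z) = a * z" and b': "\<And>z. b * (b * z) = b * z"
    using a b by (metis mult.assoc)+
  define x where "x = star (a * b)"
  have x1: "a * (b * (x * (a * b))) = a * b"
    using mult_star_mult[of "a * b"] by (simp add: x_def mult.assoc)
  have x2: "x * (a * (b * x)) = x"
    using star_mult_star[of "a * b"] by (simp add: x_def mult.assoc)
  have x2': "x * (a * (b * (x * z))) = x * z" for z
    using x2 by (metis mult.assoc)
  \<comment> \<open>\<open>b x a\<close> is also an inverse of \<open>a b\<close>, hence equals \<open>x\<close>; this makes \<open>x\<close> idempotent.\<close>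
  have "star (a * b) = b * x * a"
    by (rule star_unique) (use x1 x2 x2' a' b' in \<open>simp_all add: mult.assoc\<close>)
  hence xe: "x = b * x * a" by (simp add: x_def)
  have "x * x = b * (x * (a * (b * x))) * a"
    using xe by (metis mult.assoc)
  also have "\<dots> = x" using x2 xe by (simp add: mult.assoc)
  finally have xx: "x * x = x" .
  have "star x = a * b"
    by (rule star_unique) (use x1 x2 in \<open>simp_all add: mult.assoc\<close>)
  thus ?thesis using star_idempotent[OF xx] xx by simp
qed

lemma idempotents_commute:
  assumes "(e::'s) * e = e" and "f * f = f"
  shows "e * f = f * e"
proof -
  have "\<And>z. e * (e * z) = e * z" "\<And>z. f * (f * z) = f * z"
    using assms by (metis mult.assoc)+
  hence "star (e * f) = f * e"
    by (intro star_unique)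
      (use idempotent_mult_idempotent[OF assms] idempotent_mult_idempotent[of f e] assms
        in \<open>simp_all add: mult.assoc\<close>)
  thus ?thesis using star_idempotent[OF idempotent_mult_idempotent[OF assms]] by simp
qed

lemma star_mult_idempotent: "(star (s::'s) * s) * (star s * s) = star s * s"
  using star_mult_star[of s] by (metis mult.assoc)

lemma idempotents_iff: "(e::'s) \<in> idempotents \<longleftrightarrow> e * e = e"
proof
  assume "e \<in> idempotents"
  then obtain s where "e = star s * s" unfolding idempotents_def by auto
  thus "e * e = e" using star_mult_idempotent by simp
next
  assume "e * e = e"
  hence "e = star e * e" using star_idempotent by simp
  thus "e \<in> idempotents" unfolding idempotents_def by auto
qed

lemma conjugate_idempotent:
  assumes e: "(e::'s) * e = e"
  shows "(star s * e * s) * (star s * e * s) = star s * e * s"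
proof -
  have c: "e * (s * star s) = (s * star s) * e"
    by (rule idempotents_commute[OF e]) (metis mult_star_mult mult.assoc)
  have "(star s * e * s) * (star s * e * s) = star s * (e * (s * star s)) * e * s"
    by (simp add: mult.assoc)
  also have "\<dots> = star s * s * star s * e * e * s" using c by (simp add: mult.assoc)
  also have "\<dots> = star s * e * s" using star_mult_star[of s] e by (simp add: mult.assoc)
  finally show ?thesis .
qed

lemma minimal_projection_le:
  assumes m: "minimal_projection (e0::'s)" and f: "f * f = f"
  shows "e0 * f = e0" "f * e0 = e0"
proof -
  have e0: "e0 * e0 = e0" using m idempotents_iff unfolding minimal_projection_def by auto
  have "e0 * f \<in> idempotents" using idempotent_mult_idempotent[OF e0 f] idempotents_iff by blast
  moreover have "idem_le (e0 * f) e0" unfolding idem_le_def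
    using idempotents_commute[OF e0 f] e0 by (metis mult.assoc)
  ultimately show "e0 * f = e0" using m unfolding minimal_projection_def by blast
  thus "f * e0 = e0" using idempotents_commute[OF e0 f] by simp
qed

end

section \<open>Representations and the domain of a minimal projection\<close>

locale minimal_projection_representation = inverse_monoid +
  fixes X :: "'x set" and \<alpha> :: "'s::monoid_mult \<Rightarrow> 'x \<Rightarrow> 'x option" and e0 :: 's
  assumes minimal: "minimal_projection e0"
    and representation: "representation X \<alpha>"
begin

abbreviation D0 :: "'x set" where "D0 \<equiv> Dom \<alpha> e0"

lemma rep_mult_apply: "\<alpha> (s * t) x = (case \<alpha> t x of None \<Rightarrow> None | Some y \<Rightarrow> \<alpha> s y)"
  using representation unfolding representation_def by (simp add: map_comp_def)

lemma rep_one_apply: "\<alpha> 1 x = (if x \<in> X then Some x else None)"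
  using representation unfolding representation_def by simp

lemma rep_dom_subset: "\<alpha> s x = Some y \<Longrightarrow> x \<in> X"
  using representation unfolding representation_def partial_bij_def by blast

lemma rep_inj: "\<alpha> s x = Some z \<Longrightarrow> \<alpha> s y = Some z \<Longrightarrow> x = y"
  using representation unfolding representation_def partial_bij_def inj_on_def by (metis domI)

lemma idempotent_apply:
  assumes e: "e * e = e" and x: "\<alpha> e x = Some y"
  shows "y = x"
proof -
  have "\<alpha> e y = Some y" using rep_mult_apply[of e e x] e x by simp
  thus ?thesis using rep_inj x by metis
qed

lemma Dom_star_mult_iff: "x \<in> Dom \<alpha> (star s * s) \<longleftrightarrow> \<alpha> s x \<noteq> None"
proof
  assume "x \<in> Dom \<alpha> (star s * s)"
  thus "\<alpha> s x \<noteq> None"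
    unfolding Dom_def using rep_mult_apply[of "star s" s x] by (auto split: option.splits)
next
  assume "\<alpha> s x \<noteq> None"
  hence "\<alpha> (s * (star s * s)) x \<noteq> None" using mult_star_mult[of s] by (simp add: mult.assoc)
  thus "x \<in> Dom \<alpha> (star s * s)"
    unfolding Dom_def using rep_mult_apply[of s "star s * s" x] by (auto split: option.splits)
qed

lemma rep_star_apply:
  assumes "\<alpha> s x = Some y"
  shows "\<alpha> (star s) y = Some x"
proof -
  have "x \<in> Dom \<alpha> (star s * s)" using Dom_star_mult_iff assms by simp
  then obtain z where z: "\<alpha> (star s * s) x = Some z" unfolding Dom_def by auto
  hence "z = x" using idempotent_apply star_mult_idempotent by blast
  thus ?thesis using z rep_mult_apply[of "star s" s x] assms by simp
qed

lemma e0_idempotent: "e0 * e0 = e0"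
  using minimal idempotents_iff unfolding minimal_projection_def by auto

lemma D0_subset_Dom_idempotent:
  assumes "e * e = e"
  shows "D0 \<subseteq> Dom \<alpha> e"
proof
  fix y assume "y \<in> D0"
  hence "\<alpha> (e0 * e) y \<noteq> None" using minimal_projection_le(1)[OF minimal assms] by (auto simp: Dom_def)
  thus "y \<in> Dom \<alpha> e" unfolding Dom_def by (auto simp: rep_mult_apply split: option.splits)
qed

lemma D0_subset_Dom: "D0 \<subseteq> Dom \<alpha> (star s * s)"
  using D0_subset_Dom_idempotent star_mult_idempotent by blast

lemma D0_apply: "y \<in> D0 \<Longrightarrow> \<exists>z. \<alpha> s y = Some z"
  using D0_subset_Dom Dom_star_mult_iff by blast

lemma D0_subset_X: "D0 \<subseteq> X"
  unfolding Dom_def using rep_dom_subset by blast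

lemma e0_apply: "y \<in> D0 \<Longrightarrow> \<alpha> e0 y = Some y"
  using idempotent_apply[OF e0_idempotent] unfolding Dom_def by blast

text \<open>Minimality of \<open>e0\<close> applied to the idempotent \<open>s\<^sup>* e0 s\<close> gives \<open>s\<^sup>* e0 s e0 = e0\<close>,
  so \<open>\<alpha>\<^sub>s\<close> maps \<open>D0\<close> into \<open>D0\<close>.\<close>

lemma rep_maps_D0:
  assumes y: "y \<in> D0" and z: "\<alpha> s y = Some z"
  shows "z \<in> D0"
proof -
  define g where "g = star s * e0 * s"
  have g: "g * g = g" unfolding g_def by (rule conjugate_idempotent[OF e0_idempotent])
  have "\<alpha> (g * e0) y = Some y" using minimal_projection_le(2)[OF minimal g] e0_apply[OF y] by simp
  hence "\<alpha> g y = Some y"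
    using rep_mult_apply[of g e0 y] e0_apply[OF y] by simp
  hence "\<alpha> (star s * e0) z = Some y"
    using rep_mult_apply[of "star s * e0" s y] z unfolding g_def by (simp add: mult.assoc)
  thus "z \<in> D0" unfolding Dom_def by (auto simp: rep_mult_apply split: option.splits)
qed

lemma rep_reflects_D0: "\<alpha> s x = Some z \<Longrightarrow> z \<in> D0 \<Longrightarrow> x \<in> D0"
  using rep_maps_D0 rep_star_apply by blast

lemma img_img: "img \<alpha> s (img \<alpha> t B) = img \<alpha> (s * t) B"
  unfolding img_def by (auto simp: rep_mult_apply split: option.splits)

lemma img_UN: "img \<alpha> s (\<Union>i\<in>I. B i) = (\<Union>i\<in>I. img \<alpha> s (B i))"
  unfolding img_def by blast

lemma img_eq_UN_singleton: "img \<alpha> s B = (\<Union>y\<in>B. img \<alpha> s {y})"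
  unfolding img_def by blast

lemma img_one: "B \<subseteq> D0 \<Longrightarrow> img \<alpha> 1 B = B"
  unfolding img_def using D0_subset_X by (auto simp: rep_one_apply)

lemma img_subset_D0: "B \<subseteq> D0 \<Longrightarrow> img \<alpha> s B \<subseteq> D0"
  unfolding img_def using rep_maps_D0 by blast

lemma img_Int_D0: "img \<alpha> s B \<inter> D0 = img \<alpha> s (B \<inter> D0)"
  unfolding img_def using rep_maps_D0 rep_reflects_D0 by blast

lemma img_subset_image: "img \<alpha> s B \<subseteq> (\<lambda>x. the (\<alpha> s x)) ` B"
  unfolding img_def by force

lemma finite_img: "finite B \<Longrightarrow> finite (img \<alpha> s B)"
  using img_subset_image finite_subset by blast

lemma card_img_le: "finite B \<Longrightarrow> card (img \<alpha> s B) \<le> card B"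
  using img_subset_image by (meson card_image_le card_mono finite_imageI order_trans)

lemma card_img_D0:
  assumes "B \<subseteq> D0"
  shows "card (img \<alpha> s B) = card B"
proof -
  have "img \<alpha> s B = (\<lambda>x. the (\<alpha> s x)) ` B"
    unfolding img_def using assms D0_apply by force
  moreover have "inj_on (\<lambda>x. the (\<alpha> s x)) B"
    unfolding inj_on_def using assms D0_apply rep_inj by (metis option.sel subsetD)
  ultimately show ?thesis by (simp add: card_image)
qed

end

section \<open>Amenability excludes paradoxical decompositions\<close>

lemma additive_sum_disjoint_family:
  fixes \<mu> :: "'x set \<Rightarrow> ennreal" and n :: nat
  assumes add: "\<forall>A B. A \<subseteq> X \<longrightarrow> B \<subseteq> X \<longrightarrow> A \<inter> B = {} \<longrightarrow> \<mu> (A \<union> B) = \<mu> A + \<mu> B"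
    and empty: "\<mu> {} = 0"
    and P: "\<forall>i<n. P i \<subseteq> X" and disj: "disjoint_family_on P {..<n}"
  shows "\<mu> (\<Union>i<n. P i) = (\<Sum>i<n. \<mu> (P i))"
  using P disj
proof (induction n)
  case 0
  then show ?case using empty by simp
next
  case (Suc n)
  have "P i \<inter> P n = {}" if "i < n" for i
    using Suc.prems(2) that unfolding disjoint_family_on_def by auto
  hence "(\<Union>i<n. P i) \<inter> P n = {}" by blast
  moreover have "(\<Union>i<n. P i) \<subseteq> X" "P n \<subseteq> X" using Suc.prems(1) less_SucI by blast+
  ultimately have "\<mu> ((\<Union>i<n. P i) \<union> P n) = \<mu> (\<Union>i<n. P i) + \<mu> (P n)" using add by blast
  moreover have "disjoint_family_on P {..<n}"
    using Suc.prems(2) unfolding disjoint_family_on_def by auto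
  ultimately show ?case using Suc by (simp add: lessThan_Suc Un_commute)
qed

lemma additive_invariant_measure_pieces:
  fixes \<mu> :: "'x set \<Rightarrow> ennreal" and k :: nat
  assumes add: "\<forall>A B. A \<subseteq> X \<longrightarrow> B \<subseteq> X \<longrightarrow> A \<inter> B = {} \<longrightarrow> \<mu> (A \<union> B) = \<mu> A + \<mu> B"
    and empty: "\<mu> {} = 0"
    and invariant: "\<forall>s B. B \<subseteq> Dom \<alpha> (star s * s) \<longrightarrow> \<mu> B = \<mu> (img \<alpha> s B)"
    and P: "\<forall>i<k. P i \<subseteq> X \<and> P i \<subseteq> Dom \<alpha> (star (u i) * u i)"
    and cover: "D = (\<Union>i<k. img \<alpha> (u i) (P i))"
    and disj_img: "disjoint_family_on (\<lambda>i. img \<alpha> (u i) (P i)) {..<k}"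
    and disj: "disjoint_family_on P {..<k}"
    and D: "D \<subseteq> X"
  shows "\<mu> (\<Union>i<k. P i) = \<mu> D"
proof -
  have "\<forall>i<k. img \<alpha> (u i) (P i) \<subseteq> X" using cover D by auto
  hence "\<mu> D = (\<Sum>i<k. \<mu> (img \<alpha> (u i) (P i)))"
    using additive_sum_disjoint_family[OF add empty _ disj_img] cover by simp
  also have "\<dots> = (\<Sum>i<k. \<mu> (P i))" by (rule sum.cong[OF refl]) (metis invariant P lessThan_iff)
  also have "\<dots> = \<mu> (\<Union>i<k. P i)"
    using additive_sum_disjoint_family[OF add empty _ disj] P by simp
  finally show ?thesis by simp
qed

context minimal_projection_representation
begin

lemma amenable_not_paradoxical:
  assumes "S_amenable X \<alpha>"
  shows "\<not> S_paradoxical X \<alpha> D0"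
proof
  assume par: "S_paradoxical X \<alpha> D0"
  obtain \<mu> :: "'x set \<Rightarrow> ennreal" where
    add: "\<forall>A B. A \<subseteq> X \<longrightarrow> B \<subseteq> X \<longrightarrow> A \<inter> B = {} \<longrightarrow> \<mu> (A \<union> B) = \<mu> A + \<mu> B" and
    X1: "\<mu> X = 1" and
    invariant: "\<forall>s B. B \<subseteq> Dom \<alpha> (star s * s) \<longrightarrow> \<mu> B = \<mu> (img \<alpha> s B)" and
    supported: "\<forall>t B. B \<subseteq> X \<longrightarrow> \<mu> B = \<mu> (B \<inter> Dom \<alpha> (star t * t))"
    using assms unfolding S_amenable_def by blast
  have "\<mu> (X \<union> {}) = \<mu> X + \<mu> {}" by (intro add[rule_format]) auto
  hence empty: "\<mu> {} = 0" using X1 by simp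
  obtain t where "e0 = star t * t"
    using minimal unfolding minimal_projection_def idempotents_def by auto
  hence "\<mu> X = \<mu> (X \<inter> D0)" using supported by blast
  hence D0_1: "\<mu> D0 = 1" using X1 D0_subset_X by (simp add: Int_absorb1)
  obtain n m :: nat and As ss Bs ts where
    "n \<ge> 1" "m \<ge> 1" and
    As: "\<forall>i<n. As i \<subseteq> X \<and> As i \<subseteq> Dom \<alpha> (star (ss i) * ss i)" and
    Bs: "\<forall>j<m. Bs j \<subseteq> X \<and> Bs j \<subseteq> Dom \<alpha> (star (ts j) * ts j)" and
    A_cover: "D0 = (\<Union>i<n. img \<alpha> (ss i) (As i))"
      "disjoint_family_on (\<lambda>i. img \<alpha> (ss i) (As i)) {..<n}" and
    B_cover: "D0 = (\<Union>j<m. img \<alpha> (ts j) (Bs j))"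
      "disjoint_family_on (\<lambda>j. img \<alpha> (ts j) (Bs j)) {..<m}" and
    A_disj: "disjoint_family_on As {..<n}" and B_disj: "disjoint_family_on Bs {..<m}" and
    AB_disj: "\<forall>i<n. \<forall>j<m. As i \<inter> Bs j = {}" and
    sub: "(\<Union>i<n. As i) \<union> (\<Union>j<m. Bs j) \<subseteq> D0"
    using par unfolding S_paradoxical_def by (elim exE conjE) (rule that; assumption)
  have A1: "\<mu> (\<Union>i<n. As i) = 1"
    using additive_invariant_measure_pieces[OF add empty invariant As A_cover A_disj] D0_subset_X D0_1
    by simp
  have B1: "\<mu> (\<Union>j<m. Bs j) = 1"
    using additive_invariant_measure_pieces[OF add empty invariant Bs B_cover B_disj] D0_subset_X D0_1
    by simp
  define AB where "AB = (\<Union>i<n. As i) \<union> (\<Union>j<m. Bs j)"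
  have "AB \<union> (D0 - AB) = D0" using sub unfolding AB_def by blast
  hence "\<mu> D0 = \<mu> AB + \<mu> (D0 - AB)"
    using add[rule_format, of AB "D0 - AB"] sub D0_subset_X unfolding AB_def by auto
  moreover have "\<mu> AB = \<mu> (\<Union>i<n. As i) + \<mu> (\<Union>j<m. Bs j)"
    unfolding AB_def using sub D0_subset_X AB_disj by (intro add[rule_format]) blast+
  ultimately have "\<mu> D0 \<ge> 2" using A1 B1 by (simp add: one_add_one)
  thus False using D0_1 by simp
qed

end

section \<open>F{\o}lner sets yield an invariant mean\<close>

lemma compact_sequence_cluster_point:
  fixes u :: "nat \<Rightarrow> 'a::topological_space"
  assumes K: "compact K" and uK: "\<And>n. u n \<in> K"
  obtains f where "f \<in> K"
    and "\<And>c. closed c \<Longrightarrow> eventually (\<lambda>n. u n \<in> c) sequentially \<Longrightarrow> f \<in> c"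
proof -
  define CC where "CC = {c. closed c \<and> eventually (\<lambda>n. u n \<in> c) sequentially}"
  have "K \<inter> \<Inter>CC \<noteq> {}"
  proof (rule compact_imp_fip[OF K])
    show "closed c" if "c \<in> CC" for c using that unfolding CC_def by blast
    fix B assume B: "finite B" "B \<subseteq> CC"
    hence "eventually (\<lambda>n. \<forall>c\<in>B. u n \<in> c) sequentially"
      unfolding CC_def by (intro eventually_ball_finite) auto
    then obtain n where "\<forall>c\<in>B. u n \<in> c" using eventually_sequentially by auto
    thus "K \<inter> \<Inter>B \<noteq> {}" using uK by blast
  qed
  then obtain f where "f \<in> K" "\<forall>c\<in>CC. f \<in> c" by blast
  thus ?thesis by (intro that) (auto simp: CC_def)
qed

lemma compact_unit_interval_functions: "compact {f :: 'b \<Rightarrow> real. \<forall>B. f B \<in> {0..1}}"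
proof -
  have "compactin (product_topology (\<lambda>_. euclidean) UNIV) (PiE UNIV (\<lambda>_::'b. {0..1::real}))"
    by (simp add: compactin_PiE)
  moreover have "PiE UNIV (\<lambda>_::'b. {0..1::real}) = {f. \<forall>B. f B \<in> {0..1}}"
    by (auto simp: PiE_def Pi_def)
  ultimately show ?thesis by (simp add: euclidean_product_topology)
qed

context minimal_projection_representation
begin

lemma card_Int_img_Int_diff:
  assumes C: "C \<subseteq> D0" and F: "finite F" "F \<subseteq> D0"
  shows "\<bar>real (card (C \<inter> F)) - real (card (img \<alpha> s C \<inter> F))\<bar>
    \<le> real (card (img \<alpha> s F - F)) + real (card (img \<alpha> (star s) F - F))"
proof -
  have "img \<alpha> s (C \<inter> F) \<subseteq> (img \<alpha> s C \<inter> F) \<union> (img \<alpha> s F - F)"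
    unfolding img_def by auto
  hence "card (img \<alpha> s (C \<inter> F)) \<le> card ((img \<alpha> s C \<inter> F) \<union> (img \<alpha> s F - F))"
    by (intro card_mono) (use F finite_img in auto)
  also have "\<dots> \<le> card (img \<alpha> s C \<inter> F) + card (img \<alpha> s F - F)" by (rule card_Un_le)
  finally have le1: "card (C \<inter> F) \<le> card (img \<alpha> s C \<inter> F) + card (img \<alpha> s F - F)"
    using card_img_D0[of "C \<inter> F" s] C by (simp add: le_infI1)
  have "img \<alpha> s C \<inter> F \<subseteq> img \<alpha> s (C \<inter> F) \<union> img \<alpha> s (img \<alpha> (star s) F - F)"
    using rep_star_apply unfolding img_def by blast
  hence "card (img \<alpha> s C \<inter> F) \<le> card (img \<alpha> s (C \<inter> F) \<union> img \<alpha> s (img \<alpha> (star s) F - F))"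
    by (intro card_mono) (use F finite_img in auto)
  also have "\<dots> \<le> card (img \<alpha> s (C \<inter> F)) + card (img \<alpha> s (img \<alpha> (star s) F - F))"
    by (rule card_Un_le)
  also have "\<dots> \<le> card (C \<inter> F) + card (img \<alpha> (star s) F - F)"
    using card_img_D0[of "C \<inter> F" s] card_img_le[of "img \<alpha> (star s) F - F" s] C F finite_img
    by (simp add: le_infI1)
  finally show ?thesis using le1 by linarith
qed

lemma Folner_imp_invariant_mean:
  assumes "S_domain_Folner \<alpha> D0"
  obtains f :: "'x set \<Rightarrow> real"
  where "\<And>B. f B \<ge> 0" and "\<And>A B. A \<inter> B = {} \<Longrightarrow> f (A \<union> B) = f A + f B"
    and "f D0 = 1" and "\<And>C s. C \<subseteq> D0 \<Longrightarrow> f C = f (img \<alpha> s C)"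
proof -
  obtain F where F: "\<And>n. finite (F n) \<and> F n \<noteq> {} \<and> F n \<subseteq> D0" and
    Folner: "\<And>s. (\<lambda>n. real (card (img \<alpha> s (F n \<inter> Dom \<alpha> (star s * s)) - F n)) / real (card (F n)))
              \<longlonglongrightarrow> 0"
    using assms unfolding S_domain_Folner_def by blast
  have card_pos: "card (F n) > 0" for n using F by (simp add: card_gt_0_iff)
  define r where "r s n = real (card (img \<alpha> s (F n) - F n)) / real (card (F n))" for s n
  have "F n \<inter> Dom \<alpha> (star s * s) = F n" for n s
    using F D0_subset_Dom[of s] by blast
  hence r_lim: "r s \<longlonglongrightarrow> 0" for s
    using Folner[of s] unfolding r_def by simp
  \<comment> \<open>The relative densities of the F{\o}lner sets; an invariant mean is any of their cluster points.\<close>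
  define u where "u n B = real (card (B \<inter> F n)) / real (card (F n))" for n B
  have "u n \<in> {f. \<forall>B. f B \<in> {0..1}}" for n
    using card_pos[of n] F card_mono[of "F n" "B \<inter> F n" for B] unfolding u_def by auto
  then obtain f where f: "f \<in> {f. \<forall>B. f B \<in> {0..1}}"
    and cluster: "\<And>c. closed c \<Longrightarrow> eventually (\<lambda>n. u n \<in> c) sequentially \<Longrightarrow> f \<in> c"
    using compact_sequence_cluster_point[OF compact_unit_interval_functions] by metis
  have cont: "continuous_on UNIV (\<lambda>f :: 'x set \<Rightarrow> real. f A)" for A by simp
  show thesis
  proof
    show "f B \<ge> 0" for B using f by auto
  next
    fix A B :: "'x set" assume AB: "A \<inter> B = {}"
    have "u n (A \<union> B) = u n A + u n B" for n
    proof -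
      have "card ((A \<union> B) \<inter> F n) = card (A \<inter> F n) + card (B \<inter> F n)"
        using AB F by (subst card_Un_disjoint[symmetric]) (auto simp: Int_Un_distrib2)
      thus ?thesis unfolding u_def by (simp add: add_divide_distrib)
    qed
    hence "f \<in> {f. f (A \<union> B) = f A + f B}"
      by (intro cluster closed_Collect_eq continuous_intros cont) auto
    thus "f (A \<union> B) = f A + f B" by simp
  next
    have "u n D0 = 1" for n using F card_pos[of n] unfolding u_def by (simp add: Int_absorb1)
    hence "f \<in> {f. f D0 = 1}"
      by (intro cluster closed_Collect_eq continuous_intros cont) auto
    thus "f D0 = 1" by simp
  next
    fix C s assume C: "C \<subseteq> D0"
    have "\<bar>f C - f (img \<alpha> s C)\<bar> \<le> \<delta>" if "\<delta> > 0" for \<delta>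
    proof -
      have "eventually (\<lambda>n. r s n + r (star s) n < \<delta>) sequentially"
        using tendsto_add[OF r_lim[of s] r_lim[of "star s"]] that by (simp add: order_tendstoD(2))
      moreover have "\<bar>u n C - u n (img \<alpha> s C)\<bar> \<le> r s n + r (star s) n" for n
        using divide_right_mono[OF card_Int_img_Int_diff[OF C, of "F n" s], of "card (F n)"] F
        unfolding u_def r_def by (simp add: add_divide_distrib diff_divide_distrib[symmetric] abs_divide)
      ultimately have "eventually (\<lambda>n. u n \<in> {f. \<bar>f C - f (img \<alpha> s C)\<bar> \<le> \<delta>}) sequentially"
        by (auto elim!: eventually_mono intro: order_trans less_imp_le)
      hence "f \<in> {f. \<bar>f C - f (img \<alpha> s C)\<bar> \<le> \<delta>}"
        by (intro cluster closed_Collect_le continuous_intros cont)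
      thus ?thesis by simp
    qed
    hence "\<bar>f C - f (img \<alpha> s C)\<bar> \<le> 0" by (meson dense not_le)
    thus "f C = f (img \<alpha> s C)" by simp
  qed
qed

lemma Folner_imp_amenable:
  assumes "S_domain_Folner \<alpha> D0"
  shows "S_amenable X \<alpha>"
proof -
  obtain f :: "'x set \<Rightarrow> real" where
    nonneg: "\<And>B. f B \<ge> 0" and additive: "\<And>A B. A \<inter> B = {} \<Longrightarrow> f (A \<union> B) = f A + f B"
    and normalized: "f D0 = 1" and invariant: "\<And>C s. C \<subseteq> D0 \<Longrightarrow> f C = f (img \<alpha> s C)"
    using Folner_imp_invariant_mean[OF assms] by blast
  define \<mu> where "\<mu> B = ennreal (f (B \<inter> D0))" for B
  show ?thesis unfolding S_amenable_def
  proof (intro exI[of _ \<mu>] conjI allI impI)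
    fix A B :: "'x set" assume "A \<inter> B = {}"
    hence "f ((A \<union> B) \<inter> D0) = f (A \<inter> D0) + f (B \<inter> D0)"
      using additive[of "A \<inter> D0" "B \<inter> D0"] by (auto simp: Int_Un_distrib2)
    thus "\<mu> (A \<union> B) = \<mu> A + \<mu> B" unfolding \<mu>_def using nonneg by (simp add: ennreal_plus)
  next
    show "\<mu> X = 1" unfolding \<mu>_def using normalized D0_subset_X by (simp add: Int_absorb1)
  next
    fix s and B :: "'x set"
    show "\<mu> B = \<mu> (img \<alpha> s B)"
      unfolding \<mu>_def img_Int_D0 using invariant[of "B \<inter> D0" s] by simp
  next
    fix t and B :: "'x set"
    have "B \<inter> Dom \<alpha> (star t * t) \<inter> D0 = B \<inter> D0" using D0_subset_Dom[of t] by blast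
    thus "\<mu> B = \<mu> (B \<inter> Dom \<alpha> (star t * t))" unfolding \<mu>_def by simp
  qed
qed

end

section \<open>Hall's marriage theorem\<close>

definition hall_condition :: "'a set \<Rightarrow> ('a \<Rightarrow> 'b set) \<Rightarrow> bool" where
  "hall_condition I N \<longleftrightarrow> (\<forall>J\<subseteq>I. finite J \<longrightarrow> card J \<le> card (\<Union>(N ` J)))"

lemma hall_condition_subset: "hall_condition I N \<Longrightarrow> J \<subseteq> I \<Longrightarrow> hall_condition J N"
  unfolding hall_condition_def by auto

lemma hall_condition_remove_tight:
  assumes I: "finite I" "\<forall>i\<in>I. finite (N i)" and hall: "hall_condition I N"
    and J: "J \<subseteq> I" "card (\<Union>(N ` J)) = card J"
  shows "hall_condition (I - J) (\<lambda>i. N i - \<Union>(N ` J))"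
  unfolding hall_condition_def
proof (intro allI impI)
  fix K assume K: "K \<subseteq> I - J" "finite K"
  have "finite J" using I J finite_subset by blast
  hence fin: "finite J" "finite (\<Union>(N ` J))" using I J by auto
  have "card K + card J = card (K \<union> J)" using K fin by (subst card_Un_disjoint) auto
  also have "\<dots> \<le> card (\<Union>(N ` (K \<union> J)))"
    using hall K J fin unfolding hall_condition_def by (meson Diff_subset finite_Un le_sup_iff order_trans)
  also have "\<dots> = card (\<Union>(N ` (K \<union> J)) - \<Union>(N ` J)) + card (\<Union>(N ` J))"
  proof -
    have sub: "\<Union>(N ` J) \<subseteq> \<Union>(N ` (K \<union> J))" by blast
    have "finite (\<Union>(N ` (K \<union> J)))" using I K J fin by auto
    thus ?thesis using card_Diff_subset[OF fin(2) sub] card_mono[OF _ sub] by simp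
  qed
  also have "\<Union>(N ` (K \<union> J)) - \<Union>(N ` J) = (\<Union>i\<in>K. N i - \<Union>(N ` J))" by blast
  finally show "card K \<le> card (\<Union>i\<in>K. N i - \<Union>(N ` J))" using J(2) by linarith
qed

lemma hall_condition_remove_point:
  assumes I: "finite I" "\<forall>i\<in>I. finite (N i)" and i0: "i0 \<in> I"
    and slack: "\<forall>J. J \<noteq> {} \<longrightarrow> J \<subset> I \<longrightarrow> card J < card (\<Union>(N ` J))"
  shows "hall_condition (I - {i0}) (\<lambda>i. N i - {x})"
  unfolding hall_condition_def
proof (intro allI impI)
  fix K assume K: "K \<subseteq> I - {i0}" "finite K"
  show "card K \<le> card (\<Union>i\<in>K. N i - {x})"
  proof (cases "K = {}")
    case False
    have "K \<subset> I" using K i0 by blast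
    hence "card K < card (\<Union>(N ` K))" using slack False by blast
    moreover have "finite (\<Union>(N ` K))" using I K by auto
    moreover have "(\<Union>i\<in>K. N i - {x}) = \<Union>(N ` K) - {x}" by blast
    ultimately show ?thesis using card_Diff_singleton_if[of "\<Union>(N ` K)" x] by auto
  qed simp
qed

lemma finite_hall:
  assumes "finite I" "\<forall>i\<in>I. finite (N i)" "hall_condition I N"
  shows "\<exists>f. (\<forall>i\<in>I. f i \<in> N i) \<and> inj_on f I"
  using assms
proof (induction "card I" arbitrary: I N rule: less_induct)
  case less
  note I = less.prems(1,2) and hall = less.prems(3)
  show ?case
  proof (cases "\<exists>J. J \<noteq> {} \<and> J \<subset> I \<and> card (\<Union>(N ` J)) = card J")
    case True
    \<comment> \<open>A tight proper subset \<open>J\<close> is matched into \<open>\<Union>(N ` J)\<close>, the rest into the complement.\<close>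
    then obtain J where J: "J \<noteq> {}" "J \<subset> I" "card (\<Union>(N ` J)) = card J" by blast
    define U where "U = \<Union>(N ` J)"
    have fin: "finite J" using J(2) I(1) by (meson finite_subset psubset_imp_subset)
    have card_J: "card J < card I" using J(2) I(1) by (rule psubset_card_mono[rotated])
    have J_hyps: "\<forall>i\<in>J. finite (N i)" "hall_condition J N"
      using I J hall_condition_subset[OF hall] by auto
    obtain f1 where f1: "\<forall>i\<in>J. f1 i \<in> N i" "inj_on f1 J"
      using less.hyps[OF card_J fin J_hyps] by blast
    have "0 < card J" using fin J(1) by (simp add: card_gt_0_iff)
    moreover have "card (I - J) = card I - card J"
      using fin J(2) by (simp add: card_Diff_subset psubset_imp_subset)
    ultimately have card_IJ: "card (I - J) < card I" using card_J by linarith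
    have IJ_hyps: "\<forall>i\<in>I - J. finite (N i - U)" "hall_condition (I - J) (\<lambda>i. N i - U)"
      using I hall_condition_remove_tight[OF I hall _ J(3)] J(2) unfolding U_def by auto
    obtain f2 where f2: "\<forall>i\<in>I - J. f2 i \<in> N i - U" "inj_on f2 (I - J)"
      using less.hyps[OF card_IJ finite_Diff[OF I(1)] IJ_hyps] by blast
    define f where "f i = (if i \<in> J then f1 i else f2 i)" for i
    have "inj_on f J" using f1(2) inj_on_cong[of J f f1] unfolding f_def by simp
    moreover have "inj_on f (I - J)" using f2(2) inj_on_cong[of "I - J" f f2] unfolding f_def by simp
    moreover have "f ` (J - (I - J)) \<inter> f ` ((I - J) - J) = {}"
      using f1(1) f2(1) unfolding f_def U_def by auto
    ultimately have "inj_on f (J \<union> (I - J))" by (simp only: inj_on_Un)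
    moreover have "J \<union> (I - J) = I" using J by blast
    moreover have "\<forall>i\<in>I. f i \<in> N i" using f1(1) f2(1) unfolding f_def by auto
    ultimately show ?thesis by (intro exI[of _ f]) simp
  next
    case no_tight: False
    show ?thesis
    proof (cases "I = {}")
      case False
      then obtain i0 where i0: "i0 \<in> I" by blast
      \<comment> \<open>Without tight subsets, any \<open>x \<in> N i0\<close> may be given to \<open>i0\<close>.\<close>
      have "card {i0} \<le> card (\<Union>(N ` {i0}))" using hall i0 unfolding hall_condition_def by blast
      hence "card (N i0) \<ge> 1" by simp
      then obtain x where x: "x \<in> N i0" by (metis card.empty ex_in_conv not_one_le_zero)
      have slack: "\<forall>J. J \<noteq> {} \<longrightarrow> J \<subset> I \<longrightarrow> card J < card (\<Union>(N ` J))"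
      proof (intro allI impI)
        fix J assume J: "J \<noteq> {}" "J \<subset> I"
        hence "card J \<le> card (\<Union>(N ` J))"
          using hall I(1) unfolding hall_condition_def by (meson finite_subset psubset_imp_subset)
        moreover have "card (\<Union>(N ` J)) \<noteq> card J" using no_tight J by blast
        ultimately show "card J < card (\<Union>(N ` J))" by simp
      qed
      have card_I: "card (I - {i0}) < card I" using I(1) i0 by (rule card_Diff1_less)
      have I_hyps: "\<forall>i\<in>I - {i0}. finite (N i - {x})" "hall_condition (I - {i0}) (\<lambda>i. N i - {x})"
        using I hall_condition_remove_point[OF I i0 slack] by auto
      obtain f where f: "\<forall>i\<in>I - {i0}. f i \<in> N i - {x}" "inj_on f (I - {i0})"
        using less.hyps[OF card_I finite_Diff[OF I(1)] I_hyps] by blast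
      have "inj_on (f(i0 := x)) (I - {i0})" using f by (intro inj_on_fun_updI) auto
      moreover have "(f(i0 := x)) i0 \<notin> (f(i0 := x)) ` (I - {i0})" using f(1) by auto
      ultimately have "inj_on (f(i0 := x)) (insert i0 (I - {i0}))" by (metis inj_on_insert Diff_idemp)
      moreover have "insert i0 (I - {i0}) = I" using i0 by blast
      moreover have "\<forall>i\<in>I. (f(i0 := x)) i \<in> N i" using f(1) x by auto
      ultimately show ?thesis by (intro exI[of _ "f(i0 := x)"]) simp
    qed simp
  qed
qed

lemma closedin_product_discrete_neq:
  assumes "\<forall>w\<in>W. finite (N w)" "w \<in> W" "w' \<in> W"
  defines "T \<equiv> product_topology (\<lambda>w. discrete_topology (N w)) W"
  shows "closedin T {g \<in> topspace T. g w \<noteq> g w'}"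
proof -
  have pre: "closedin T {g \<in> topspace T. g v \<in> S}" if "v \<in> W" "S \<subseteq> N v" for v S
    using closedin_continuous_map_preimage[OF continuous_map_product_projection[OF that(1),
          of "\<lambda>w. discrete_topology (N w)"], of S]
      that unfolding T_def by simp
  have "{g \<in> topspace T. g w \<noteq> g w'}
      = (\<Union>a\<in>N w. {g \<in> topspace T. g w \<in> {a}} \<inter> {g \<in> topspace T. g w' \<in> N w' - {a}})"
    using assms(2,3) unfolding T_def by (auto simp: PiE_iff)
  moreover have "closedin T ({g \<in> topspace T. g w \<in> {a}} \<inter> {g \<in> topspace T. g w' \<in> N w' - {a}})"
    if "a \<in> N w" for a
    using that assms(2,3) by (intro closedin_Int pre) auto
  hence "closedin T (\<Union>a\<in>N w. {g \<in> topspace T. g w \<in> {a}} \<inter> {g \<in> topspace T. g w' \<in> N w' - {a}})"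
    using assms(1,2) by (intro closedin_Union) auto
  ultimately show ?thesis by simp
qed

text \<open>The infinite case follows from the finite one by compactness of the product of the finite
  discrete spaces \<open>N w\<close>: the closed sets \<open>{g. g w \<noteq> g w'}\<close> have the finite intersection property.\<close>

lemma infinite_hall:
  assumes fin: "\<forall>w\<in>W. finite (N w)" and hall: "hall_condition W N"
  shows "\<exists>f. (\<forall>w\<in>W. f w \<in> N w) \<and> inj_on f W"
proof -
  define T where "T = product_topology (\<lambda>w. discrete_topology (N w)) W"
  have top: "topspace T = PiE W N" unfolding T_def by simp
  have compact: "compact_space T" unfolding T_def
    using fin by (intro compact_space_product_topology[THEN iffD2] disjI2 ballI)
      (auto simp: compact_space_def intro: finite_imp_compactin)
  have nonempty: "N w \<noteq> {}" if "w \<in> W" for w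
  proof -
    have "card {w} \<le> card (\<Union>(N ` {w}))" using hall that unfolding hall_condition_def by blast
    thus ?thesis by auto
  qed
  define C where "C w w' = {g \<in> topspace T. g w \<noteq> g w'}" for w w'
  define Q where "Q = {(w, w'). w \<in> W \<and> w' \<in> W \<and> w \<noteq> w'}"
  define U where "U = insert (topspace T) ((\<lambda>(w, w'). C w w') ` Q)"
  have "\<Inter>U \<noteq> {}"
  proof (rule compact_space_fip[THEN iffD1, OF compact, rule_format], intro conjI allI impI)
    show "\<forall>c\<in>U. closedin T c"
      using closedin_product_discrete_neq[OF fin] closedin_topspace[of T]
      unfolding U_def Q_def C_def T_def by auto
  next
    fix F assume F: "finite F \<and> F \<subseteq> U"
    hence "F - {topspace T} \<subseteq> (\<lambda>(w, w'). C w w') ` Q" unfolding U_def by blast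
    then obtain P where P: "P \<subseteq> Q" "finite P" "F - {topspace T} = (\<lambda>(w, w'). C w w') ` P"
      using F by (metis finite_Diff finite_subset_image)
    define D where "D = fst ` P \<union> snd ` P"
    have D: "D \<subseteq> W" "finite D" using P unfolding D_def Q_def by auto
    obtain f where f: "\<forall>i\<in>D. f i \<in> N i" "inj_on f D"
      using finite_hall[OF D(2)] hall_condition_subset[OF hall D(1)] fin D(1) by blast
    define g where "g w = (if w \<in> D then f w else if w \<in> W then (SOME a. a \<in> N w) else undefined)" for w
    have gT: "g \<in> topspace T" unfolding top g_def using f D nonempty
      by (auto simp: PiE_iff some_in_eq extensional_def)
    have gC: "g \<in> C w w'" if "(w, w') \<in> P" for w w'
    proof -
      have "w \<in> D" "w' \<in> D" "w \<noteq> w'" using that P(1) unfolding D_def Q_def by force+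
      hence "g w \<noteq> g w'" using f(2) unfolding g_def inj_on_def by auto
      thus ?thesis unfolding C_def using gT by blast
    qed
    have "g \<in> Z" if "Z \<in> F" for Z
    proof (cases "Z = topspace T")
      case False
      hence "Z \<in> (\<lambda>(w, w'). C w w') ` P" using that P(3) by blast
      then obtain w w' where "(w, w') \<in> P" "Z = C w w'" by auto
      thus ?thesis using gC by simp
    qed (use gT in simp)
    hence "g \<in> \<Inter>F" by blast
    thus "\<Inter>F \<noteq> {}" by blast
  qed
  then obtain g where g: "g \<in> \<Inter>U" by blast
  have "\<forall>w\<in>W. g w \<in> N w" using g unfolding U_def top by (auto simp: PiE_iff)
  moreover have "inj_on g W"
  proof (rule inj_onI, rule ccontr)
    fix w w' assume "w \<in> W" "w' \<in> W" "g w = g w'" "w \<noteq> w'"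
    hence "g \<in> C w w'" using g unfolding U_def Q_def by auto
    thus False using \<open>g w = g w'\<close> unfolding C_def by simp
  qed
  ultimately show ?thesis by blast
qed

section \<open>Without F{\o}lner sets the domain is paradoxical\<close>

context minimal_projection_representation
begin

lemma Folner_if_almost_invariant:
  assumes countable: "countable (UNIV :: 's set)"
    and almost_invariant: "\<And>K \<epsilon>. finite K \<Longrightarrow> \<epsilon> > 0 \<Longrightarrow> \<exists>F. finite F \<and> F \<noteq> {} \<and> F \<subseteq> D0 \<and>
               (\<forall>s\<in>K. real (card (img \<alpha> s F - F)) \<le> \<epsilon> * real (card F))"
  shows "S_domain_Folner \<alpha> D0"
proof -
  \<comment> \<open>The \<open>n\<close>-th set is \<open>1/(n+1)\<close>-invariant under the first \<open>n+1\<close> elements of an enumeration of \<open>S\<close>.\<close>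
  define g where "g = from_nat_into (UNIV :: 's set)"
  have g: "range g = UNIV" unfolding g_def using countable by simp
  define P where "P n F \<longleftrightarrow> finite F \<and> F \<noteq> {} \<and> F \<subseteq> D0 \<and>
     (\<forall>s\<in>g ` {..n}. real (card (img \<alpha> s F - F)) \<le> inverse (real (Suc n)) * real (card F))" for n F
  define F where "F n = (SOME F. P n F)" for n
  have "P n (F n)" for n
    unfolding F_def by (rule someI_ex) (unfold P_def, rule almost_invariant, auto)
  hence F: "finite (F n)" "F n \<noteq> {}" "F n \<subseteq> D0"
    "\<forall>s\<in>g ` {..n}. real (card (img \<alpha> s (F n) - F n)) \<le> inverse (real (Suc n)) * real (card (F n))" for n
    unfolding P_def by auto
  show ?thesis unfolding S_domain_Folner_def
  proof (intro exI[of _ F] conjI allI)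
    fix n show "finite (F n)" "F n \<noteq> {}" "F n \<subseteq> D0" using F by auto
  next
    fix s
    obtain k where k: "g k = s" using g by (metis UNIV_I imageE)
    have "F n \<inter> Dom \<alpha> (star s * s) = F n" for n using F(3) D0_subset_Dom[of s] by blast
    moreover have "(\<lambda>n. real (card (img \<alpha> s (F n) - F n)) / real (card (F n))) \<longlonglongrightarrow> 0"
    proof (rule tendsto_sandwich[OF _ _ tendsto_const LIMSEQ_inverse_real_of_nat])
      show "\<forall>\<^sub>F n in sequentially. 0 \<le> real (card (img \<alpha> s (F n) - F n)) / real (card (F n))" by simp
      have "real (card (img \<alpha> s (F n) - F n)) / real (card (F n)) \<le> inverse (real (Suc n))"
        if "n \<ge> k" for n
      proof -
        have "real (card (img \<alpha> s (F n) - F n)) \<le> inverse (real (Suc n)) * real (card (F n))"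
          using F(4)[of n] k that by auto
        moreover have "card (F n) > 0" using F(1,2)[of n] by (simp add: card_gt_0_iff)
        ultimately show ?thesis by (simp add: divide_le_eq)
      qed
      thus "\<forall>\<^sub>F n in sequentially.
          real (card (img \<alpha> s (F n) - F n)) / real (card (F n)) \<le> inverse (real (Suc n))"
        unfolding eventually_sequentially by blast
    qed
    ultimately show "(\<lambda>n. real (card (img \<alpha> s (F n \<inter> Dom \<alpha> (star s * s)) - F n)) / real (card (F n)))
        \<longlonglongrightarrow> 0" by simp
  qed
qed

lemma not_Folner_imp_expansion:
  assumes "countable (UNIV :: 's set)" and "\<not> S_domain_Folner \<alpha> D0"
  obtains L \<epsilon> where "finite L" "L \<noteq> {}" "\<epsilon> > (0::real)"
    and "\<And>G. finite G \<Longrightarrow> G \<noteq> {} \<Longrightarrow> G \<subseteq> D0 \<Longrightarrow>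
           (1 + \<epsilon>) * real (card G) \<le> real (card (\<Union>s\<in>L. img \<alpha> s G))"
proof -
  obtain K \<epsilon> where K: "finite K" "\<epsilon> > (0::real)" and
    moves: "\<And>G. finite G \<Longrightarrow> G \<noteq> {} \<Longrightarrow> G \<subseteq> D0 \<Longrightarrow> \<exists>s\<in>K. real (card (img \<alpha> s G - G)) > \<epsilon> * real (card G)"
    using Folner_if_almost_invariant assms by (meson not_le)
  have "(1 + \<epsilon>) * real (card G) \<le> real (card (\<Union>s\<in>insert 1 K. img \<alpha> s G))"
    if G: "finite G" "G \<noteq> {}" "G \<subseteq> D0" for G
  proof -
    obtain s where s: "s \<in> K" "real (card (img \<alpha> s G - G)) > \<epsilon> * real (card G)" using moves[OF G] by blast
    have "G \<union> (img \<alpha> s G - G) \<subseteq> (\<Union>s\<in>insert 1 K. img \<alpha> s G)" using img_one[OF G(3)] s(1) by blast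
    hence "card (G \<union> (img \<alpha> s G - G)) \<le> card (\<Union>s\<in>insert 1 K. img \<alpha> s G)"
      using K(1) G(1) finite_img by (intro card_mono) auto
    moreover have "card (G \<union> (img \<alpha> s G - G)) = card G + card (img \<alpha> s G - G)"
      using G(1) finite_img[OF G(1)] by (intro card_Un_disjoint) auto
    ultimately show ?thesis using s(2) by (simp add: algebra_simps)
  qed
  thus thesis using that[of "insert 1 K" \<epsilon>] K by blast
qed

lemma expansion_power:
  assumes L: "finite L" "L \<noteq> {}" and \<epsilon>: "\<epsilon> > 0"
    and expansion: "\<And>G. finite G \<Longrightarrow> G \<noteq> {} \<Longrightarrow> G \<subseteq> D0 \<Longrightarrow>
           (1 + \<epsilon>) * real (card G) \<le> real (card (\<Union>s\<in>L. img \<alpha> s G))"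
  shows "\<exists>M. finite M \<and> M \<noteq> {} \<and> (\<forall>F. finite F \<longrightarrow> F \<noteq> {} \<longrightarrow> F \<subseteq> D0 \<longrightarrow>
            (1 + \<epsilon>) ^ k * real (card F) \<le> real (card (\<Union>t\<in>M. img \<alpha> t F)))"
proof (induction k)
  case 0
  show ?case by (intro exI[of _ "{1}"]) (auto simp: img_one)
next
  case (Suc k)
  then obtain M where M: "finite M" "M \<noteq> {}" and
    grow: "\<And>F. finite F \<Longrightarrow> F \<noteq> {} \<Longrightarrow> F \<subseteq> D0 \<Longrightarrow>
      (1 + \<epsilon>) ^ k * real (card F) \<le> real (card (\<Union>t\<in>M. img \<alpha> t F))"
    by blast
  define M' where "M' = (\<lambda>(a, b). a * b) ` (L \<times> M)"
  have "(1 + \<epsilon>) ^ Suc k * real (card F) \<le> real (card (\<Union>t\<in>M'. img \<alpha> t F))"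
    if F: "finite F" "F \<noteq> {}" "F \<subseteq> D0" for F
  proof -
    define G where "G = (\<Union>t\<in>M. img \<alpha> t F)"
    have G: "finite G" "G \<subseteq> D0"
      unfolding G_def using M(1) F(1) finite_img img_subset_D0[OF F(3)] by auto
    have "0 < (1 + \<epsilon>) ^ k * real (card F)" using F \<epsilon> by (simp add: card_gt_0_iff)
    hence "0 < real (card G)" using grow[OF F] unfolding G_def by linarith
    hence "G \<noteq> {}" by auto
    have "(\<Union>t\<in>M'. img \<alpha> t F) = (\<Union>a\<in>L. img \<alpha> a G)"
      unfolding M'_def G_def img_UN by (auto simp: img_img)
    moreover have "(1 + \<epsilon>) ^ Suc k * real (card F) \<le> (1 + \<epsilon>) * real (card G)"
      using grow[OF F] \<epsilon> unfolding G_def by (simp add: mult.assoc)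
    ultimately show ?thesis using expansion[OF G(1) \<open>G \<noteq> {}\<close> G(2)] by simp
  qed
  moreover have "finite M'" "M' \<noteq> {}" using L M unfolding M'_def by auto
  ultimately show ?case by blast
qed

lemma not_Folner_imp_doubling:
  assumes "countable (UNIV :: 's set)" and "\<not> S_domain_Folner \<alpha> D0"
  obtains M where "finite M" "M \<noteq> {}"
    and "\<And>F. finite F \<Longrightarrow> F \<subseteq> D0 \<Longrightarrow> 2 * card F \<le> card (\<Union>t\<in>M. img \<alpha> t F)"
proof -
  obtain L \<epsilon> where L: "finite L" "L \<noteq> {}" and \<epsilon>: "\<epsilon> > (0::real)"
    and expansion: "\<And>G. finite G \<Longrightarrow> G \<noteq> {} \<Longrightarrow> G \<subseteq> D0 \<Longrightarrow>
           (1 + \<epsilon>) * real (card G) \<le> real (card (\<Union>s\<in>L. img \<alpha> s G))"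
    using not_Folner_imp_expansion[OF assms] by blast
  obtain k where k: "2 < (1 + \<epsilon>) ^ k" using real_arch_pow[of "1 + \<epsilon>" 2] \<epsilon> by auto
  obtain M where M: "finite M" "M \<noteq> {}" and
    grow: "\<And>F. finite F \<Longrightarrow> F \<noteq> {} \<Longrightarrow> F \<subseteq> D0 \<Longrightarrow>
      (1 + \<epsilon>) ^ k * real (card F) \<le> real (card (\<Union>t\<in>M. img \<alpha> t F))"
    using expansion_power[OF L \<epsilon> expansion, of k] by blast
  have "2 * card F \<le> card (\<Union>t\<in>M. img \<alpha> t F)" if F: "finite F" "F \<subseteq> D0" for F
  proof (cases "F = {}")
    case False
    have "2 * real (card F) \<le> (1 + \<epsilon>) ^ k * real (card F)" using k by (intro mult_right_mono) auto
    thus ?thesis using grow[OF F(1) False F(2)] by linarith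
  qed simp
  thus thesis using that M by blast
qed

text \<open>Doubling is Hall's condition for matching every \<open>(y, b) \<in> D0 \<times> UNIV\<close> to a point of
  \<open>\<Union>t\<in>M. \<alpha>\<^sub>t {y}\<close>.\<close>

lemma doubling_imp_two_to_one:
  assumes M: "finite M"
    and doubling: "\<And>F. finite F \<Longrightarrow> F \<subseteq> D0 \<Longrightarrow> 2 * card F \<le> card (\<Union>t\<in>M. img \<alpha> t F)"
  obtains \<psi> :: "'x \<times> bool \<Rightarrow> 'x"
  where "inj_on \<psi> (D0 \<times> UNIV)" and "\<And>y b. y \<in> D0 \<Longrightarrow> \<exists>t\<in>M. \<alpha> t y = Some (\<psi> (y, b))"
proof -
  define N where "N w = (\<Union>t\<in>M. img \<alpha> t {fst w})" for w :: "'x \<times> bool"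
  have "hall_condition (D0 \<times> (UNIV :: bool set)) N" unfolding hall_condition_def
  proof (intro allI impI)
    fix J :: "('x \<times> bool) set" assume J: "J \<subseteq> D0 \<times> UNIV" "finite J"
    have P: "finite (fst ` J)" "fst ` J \<subseteq> D0" using J by auto
    have "J \<subseteq> fst ` J \<times> (UNIV :: bool set)" by force
    hence "card J \<le> card (fst ` J \<times> (UNIV :: bool set))" using P by (intro card_mono) auto
    also have "\<dots> = 2 * card (fst ` J)" by (simp add: card_cartesian_product)
    also have "\<dots> \<le> card (\<Union>t\<in>M. img \<alpha> t (fst ` J))" using doubling[OF P] .
    also have "(\<Union>t\<in>M. img \<alpha> t (fst ` J)) = \<Union>(N ` J)"
      unfolding N_def by (subst img_eq_UN_singleton) blast
    finally show "card J \<le> card (\<Union>(N ` J))" .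
  qed
  moreover have "\<forall>w\<in>D0 \<times> UNIV. finite (N w)" unfolding N_def using M finite_img by blast
  ultimately obtain \<psi> where "\<forall>w\<in>D0 \<times> UNIV. \<psi> w \<in> N w" "inj_on \<psi> (D0 \<times> UNIV)"
    using infinite_hall by blast
  thus thesis using that unfolding N_def img_def by fastforce
qed

lemma piecewise_injection_decomposition:
  fixes u :: "nat \<Rightarrow> 's"
  assumes \<phi>: "inj_on \<phi> D0" and piecewise: "\<And>y. y \<in> D0 \<Longrightarrow> \<exists>i<r. \<alpha> (u i) y = Some (\<phi> y)"
  obtains C where "\<And>i. C i \<subseteq> \<phi> ` D0"
    and "D0 = (\<Union>i<r. img \<alpha> (star (u i)) (C i))"
    and "disjoint_family_on (\<lambda>i. img \<alpha> (star (u i)) (C i)) {..<r}"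
    and "disjoint_family_on C {..<r}"
proof -
  define idx where "idx y = (LEAST i. i < r \<and> \<alpha> (u i) y = Some (\<phi> y))" for y
  have idx: "idx y < r" "\<alpha> (u (idx y)) y = Some (\<phi> y)" if "y \<in> D0" for y
    using LeastI_ex[OF piecewise[OF that]] unfolding idx_def by auto
  define C where "C i = \<phi> ` {y \<in> D0. idx y = i}" for i
  have img_C: "img \<alpha> (star (u i)) (C i) = {y \<in> D0. idx y = i}" for i
  proof
    show "img \<alpha> (star (u i)) (C i) \<subseteq> {y \<in> D0. idx y = i}"
      unfolding img_def C_def using idx rep_star_apply by fastforce
    show "{y \<in> D0. idx y = i} \<subseteq> img \<alpha> (star (u i)) (C i)"
      unfolding img_def C_def using idx rep_star_apply by fastforce
  qed
  show thesis
  proof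
    show "C i \<subseteq> \<phi> ` D0" for i unfolding C_def by blast
    show "D0 = (\<Union>i<r. img \<alpha> (star (u i)) (C i))" unfolding img_C using idx by blast
    show "disjoint_family_on (\<lambda>i. img \<alpha> (star (u i)) (C i)) {..<r}"
      unfolding disjoint_family_on_def img_C by blast
    show "disjoint_family_on C {..<r}"
      using \<phi> unfolding disjoint_family_on_def C_def inj_on_def by blast
  qed
qed

lemma not_Folner_imp_paradoxical:
  assumes "countable (UNIV :: 's set)" and "\<not> S_domain_Folner \<alpha> D0"
  shows "S_paradoxical X \<alpha> D0"
proof -
  obtain M where M: "finite M" "M \<noteq> {}"
    and doubling: "\<And>F. finite F \<Longrightarrow> F \<subseteq> D0 \<Longrightarrow> 2 * card F \<le> card (\<Union>t\<in>M. img \<alpha> t F)"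
    using not_Folner_imp_doubling[OF assms] by blast
  obtain \<psi> :: "'x \<times> bool \<Rightarrow> 'x" where \<psi>: "inj_on \<psi> (D0 \<times> UNIV)"
    and \<psi>_M: "\<And>y b. y \<in> D0 \<Longrightarrow> \<exists>t\<in>M. \<alpha> t y = Some (\<psi> (y, b))"
    using doubling_imp_two_to_one[OF M(1) doubling] by blast
  obtain r :: nat and u where u: "M = u ` {i. i < r}"
    using finite_imp_nat_seg_image_inj_on[OF M(1)] by blast
  have "r \<ge> 1" using M(2) u by (cases r) auto
  have half: "\<exists>C. (\<forall>i. C i \<subseteq> (\<lambda>y. \<psi> (y, b)) ` D0)
      \<and> D0 = (\<Union>i<r. img \<alpha> (star (u i)) (C i))
      \<and> disjoint_family_on (\<lambda>i. img \<alpha> (star (u i)) (C i)) {..<r}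
      \<and> disjoint_family_on C {..<r}" for b
  proof -
    have inj: "inj_on (\<lambda>y. \<psi> (y, b)) D0" using \<psi> unfolding inj_on_def by blast
    have piecewise: "\<exists>i<r. \<alpha> (u i) y = Some (\<psi> (y, b))" if "y \<in> D0" for y
      using \<psi>_M[OF that, of b] u by blast
    obtain C where "\<And>i. C i \<subseteq> (\<lambda>y. \<psi> (y, b)) ` D0"
      "D0 = (\<Union>i<r. img \<alpha> (star (u i)) (C i))"
      "disjoint_family_on (\<lambda>i. img \<alpha> (star (u i)) (C i)) {..<r}" "disjoint_family_on C {..<r}"
      using piecewise_injection_decomposition[OF inj piecewise] by blast
    thus ?thesis by blast
  qed
  obtain A where A: "\<forall>i. A i \<subseteq> (\<lambda>y. \<psi> (y, False)) ` D0" "D0 = (\<Union>i<r. img \<alpha> (star (u i)) (A i))"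
    "disjoint_family_on (\<lambda>i. img \<alpha> (star (u i)) (A i)) {..<r}" "disjoint_family_on A {..<r}"
    using half by blast
  obtain B where B: "\<forall>i. B i \<subseteq> (\<lambda>y. \<psi> (y, True)) ` D0" "D0 = (\<Union>i<r. img \<alpha> (star (u i)) (B i))"
    "disjoint_family_on (\<lambda>i. img \<alpha> (star (u i)) (B i)) {..<r}" "disjoint_family_on B {..<r}"
    using half by blast
  have "\<psi> (y, False) \<noteq> \<psi> (y', True)" if "y \<in> D0" "y' \<in> D0" for y y'
    using \<psi> that unfolding inj_on_def by blast
  hence AB: "\<forall>i<r. \<forall>j<r. A i \<inter> B j = {}" using A(1) B(1) by blast
  have "(\<lambda>y. \<psi> (y, b)) ` D0 \<subseteq> D0" for b using \<psi>_M rep_maps_D0 by blast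
  hence AB_D0: "A i \<subseteq> D0" "B i \<subseteq> D0" for i using A(1) B(1) by blast+
  hence "\<forall>i<r. A i \<subseteq> X \<and> A i \<subseteq> Dom \<alpha> (star (star (u i)) * star (u i))"
    "\<forall>i<r. B i \<subseteq> X \<and> B i \<subseteq> Dom \<alpha> (star (star (u i)) * star (u i))"
    "(\<Union>i<r. A i) \<union> (\<Union>j<r. B j) \<subseteq> D0"
    using D0_subset_X D0_subset_Dom by blast+
  show ?thesis
    unfolding S_paradoxical_def
    by (rule exI[of _ r], rule exI[of _ r], rule exI[of _ A], rule exI[of _ B],
        rule exI[of _ "\<lambda>i. star (u i)"], rule exI[of _ "\<lambda>i. star (u i)"], intro conjI; fact)
qed

end

theorem mainTheorem11:
  fixes X :: "'x set" and \<alpha> :: "'s::monoid_mult \<Rightarrow> 'x \<Rightarrow> 'x option" and e0 :: 's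
  assumes "inverse_semigroup TYPE('s)"
    and "countable (UNIV :: 's set)"
    and "minimal_projection e0"
    and "representation X \<alpha>"
  shows "(S_amenable X \<alpha> \<longleftrightarrow> \<not> S_paradoxical X \<alpha> (Dom \<alpha> e0))
       \<and> (\<not> S_paradoxical X \<alpha> (Dom \<alpha> e0) \<longleftrightarrow> S_domain_Folner \<alpha> (Dom \<alpha> e0))"
proof -
  interpret minimal_projection_representation X \<alpha> e0
    using assms(1,3,4) by unfold_locales
  show ?thesis
    using amenable_not_paradoxical not_Folner_imp_paradoxical[OF assms(2)] Folner_imp_amenable
    by blast
qed

end
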